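(* In the setting described in the context, suppose that $\mathbb E_N[e^{\gamma X(x)}]\le R_\gamma\epsilon_N^{-\gamma^2/2}$ for all $\gamma>0$, $x\in\Omega$, $N$ (some $R_\gamma>0$ and $\epsilon_N\to0$), and that there exist deterministic constants $\mathrm C,\mathrm c>0$ such that $\mathbb P_N$-almost surely, for any $x\in\Omega$ there is a (possibly random) compact $\mho_x^N\subset\Omega$ with $|\mho_x^N|\ge\mathrm c\,\epsilon_N^d$ and $X(t)\ge X(x)-\mathrm C$ for all $t\in\mho_x^N$ (it is not required that $x\in\mho_x^N$). Then for any $\alpha>\gamma_*$, $\mathbb P_N[\mathscr T_N^\alpha\ne\emptyset]\to0$ as $N\to\infty$. Moreover, if $\varpi_N$ is any increasing sequence with $\varpi_N/\log\epsilon_N^{-1}\to+\infty$, then for any $\gamma>0$ there is $C_\gamma>0$ with \[ \mathbb P_N\big[\sup_\Omega X\ge\varpi_N\big]\le C_\gamma\epsilon_N^{-\gamma^2/2-d}e^{-\gamma\varpi_N}. \]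
   Context: $\Omega\subset\mathbb R^d$ is a bounded, simply connected open set with smooth boundary; $|\cdot|$ is Lebesgue measure; $\gamma_*=\sqrt{2d}$. For each $N$, $\mathbb P_N$ (expectation $\mathbb E_N$) is a probability measure under which the canonical process $X$ is a random function on $\Omega$ that is integrable, bounded above and upper semicontinuous, and which approximates a Gaussian log-correlated field on $\Omega$ (for each $f\in C_c^\infty(\Omega)$ the law of $\int fX$ converges to that of the Gaussian field with covariance $\log|x-y|^{-1}+g(x,y)$, $g$ continuous, bounded above, $L^2$). Thick points: for $\alpha\ge0$, $\mathscr T_N^\alpha=\{x\in\Omega:X(x)\ge\alpha\log\epsilon_N^{-1}\}$. *)

theory Defs
  imports "HOL-Analysis.Analysis" "HOL-Probability.Probability"
begin

fun partial_iter :: "'a::euclidean_space list \<Rightarrow> ('a \<Rightarrow> real) \<Rightarrow> 'a \<Rightarrow> real" where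
  "partial_iter [] f = f"
| "partial_iter (b # bs) f = (\<lambda>x. deriv (\<lambda>t. partial_iter bs f (x + t *\<^sub>R b)) 0)"

definition smooth_on :: "'a::euclidean_space set \<Rightarrow> ('a \<Rightarrow> real) \<Rightarrow> bool" where
  "smooth_on S f \<longleftrightarrow>
     (\<forall>bs \<in> lists Basis. continuous_on S (partial_iter bs f) \<and>
        (\<forall>b \<in> Basis. \<forall>x \<in> S. (\<lambda>t. partial_iter bs f (x + t *\<^sub>R b)) differentiable (at 0)))"

definition test_function :: "'a::euclidean_space set \<Rightarrow> ('a \<Rightarrow> real) \<Rightarrow> bool" where
  "test_function \<Omega> f \<longleftrightarrow> smooth_on UNIV f \<and>
     compact (closure {x. f x \<noteq> 0}) \<and> closure {x. f x \<noteq> 0} \<subseteq> \<Omega>"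

definition smooth_boundary :: "'a::euclidean_space set \<Rightarrow> bool" where
  "smooth_boundary \<Omega> \<longleftrightarrow>
     (\<forall>p \<in> frontier \<Omega>. \<exists>r>0. \<exists>\<phi>. smooth_on UNIV \<phi> \<and>
        (\<exists>b \<in> Basis. partial_iter [b] \<phi> p \<noteq> 0) \<and>
        \<Omega> \<inter> ball p r = {x \<in> ball p r. \<phi> x < 0})"

definition centered_normal :: "real \<Rightarrow> real measure" where
  "centered_normal s2 =
     (if s2 = 0 then return borel 0 else density lborel (normal_density 0 (sqrt s2)))"

(* outer probability (avoids measurability issues for events like "sup X \<ge> a") *)
definition outer_prob :: "'w measure \<Rightarrow> 'w set \<Rightarrow> real" where
  "outer_prob M A = Inf {measure M B | B. B \<in> sets M \<and> A \<subseteq> B}"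

definition thick_points :: "'a set \<Rightarrow> real \<Rightarrow> ('a \<Rightarrow> real) \<Rightarrow> real \<Rightarrow> 'a set" where
  "thick_points \<Omega> \<epsilon> Y \<alpha> = {x \<in> \<Omega>. Y x \<ge> \<alpha> * ln (1 / \<epsilon>)}"

definition usc_on :: "'a::topological_space set \<Rightarrow> ('a \<Rightarrow> real) \<Rightarrow> bool" where
  "usc_on S f \<longleftrightarrow> (\<forall>x \<in> S. \<forall>a. f x < a \<longrightarrow> eventually (\<lambda>y. f y < a) (at x within S))"

end

theory Submission imports Defs begin

(*
  Fubini and the moment bound give E \<integral>\<^sub>\<Omega> e^(\<gamma>X) \<le> R \<epsilon>^(-\<gamma>\<^sup>2/2) |\<Omega>|. If X(x) \<ge> a at some
  point x, then X \<ge> a - C on the plateau \<mho>\<^sub>x, whose measure is at least c \<epsilon>^d, so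
  \<integral>\<^sub>\<Omega> e^(\<gamma>X) \<ge> c \<epsilon>^d e^(\<gamma>(a - C)). Markov's inequality therefore bounds the (outer)
  probability that X reaches level a by K\<^sub>\<gamma> \<epsilon>^(-\<gamma>\<^sup>2/2 - d) e^(-\<gamma>a). With \<gamma> = \<alpha> and
  a = \<alpha> log(1/\<epsilon>) this is K\<^sub>\<alpha> \<epsilon>^(\<alpha>\<^sup>2/2 - d), which tends to 0 for \<alpha> > sqrt(2d); with
  a = \<varpi>\<^sub>N - 1 it is the tail bound.
*)

lemma bdd_below_outer_prob_candidates:
  "bdd_below {measure M B | B. B \<in> sets M \<and> A \<subseteq> B}"
  by (rule bdd_belowI[where m=0]) auto

lemma outer_prob_nonneg:
  assumes "A \<subseteq> space M"
  shows "0 \<le> outer_prob M A"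
  unfolding outer_prob_def using assms by (intro cInf_greatest) auto

lemma outer_prob_le_measure:
  assumes "B \<in> sets M" "A \<subseteq> B"
  shows "outer_prob M A \<le> measure M B"
  unfolding outer_prob_def using assms
  by (intro cInf_lower bdd_below_outer_prob_candidates) blast

lemma outer_prob_mono:
  assumes "A \<subseteq> B" "B \<subseteq> space M"
  shows "outer_prob M A \<le> outer_prob M B"
  unfolding outer_prob_def
proof (rule cInf_superset_mono)
  show "{measure M C | C. C \<in> sets M \<and> B \<subseteq> C} \<noteq> {}"
    using assms(2) by blast
  show "{measure M C | C. C \<in> sets M \<and> B \<subseteq> C} \<subseteq> {measure M C | C. C \<in> sets M \<and> A \<subseteq> C}"
    using assms(1) by blast
qed (rule bdd_below_outer_prob_candidates)

lemma outer_prob_le_measure_AE: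
  assumes "A \<subseteq> space M" "B \<in> sets M" "AE \<omega> in M. \<omega> \<in> A \<longrightarrow> \<omega> \<in> B"
  shows "outer_prob M A \<le> measure M B"
proof -
  obtain N where N: "\<And>\<omega>. \<omega> \<in> space M - N \<Longrightarrow> \<omega> \<in> A \<longrightarrow> \<omega> \<in> B" "N \<in> null_sets M"
    by (rule AE_E3[OF assms(3)]) blast
  have "A \<subseteq> B \<union> N"
    using assms(1) N(1) by blast
  then have "outer_prob M A \<le> measure M (B \<union> N)"
    using assms(2) N(2) by (intro outer_prob_le_measure) auto
  also have "\<dots> = measure M B"
    using assms(2) N(2) by (rule measure_Un_null_set)
  finally show ?thesis .
qed

lemma nn_integral_iterated_le:
  fixes f :: "'w \<Rightarrow> 'a \<Rightarrow> ennreal"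
  assumes "pair_sigma_finite M \<mu>"
    and meas: "(\<lambda>(\<omega>, x). f \<omega> x) \<in> borel_measurable (M \<Otimes>\<^sub>M \<mu>)"
    and bound: "\<And>x. x \<in> space \<mu> \<Longrightarrow> (\<integral>\<^sup>+ \<omega>. f \<omega> x \<partial>M) \<le> R"
  shows "(\<integral>\<^sup>+ \<omega>. (\<integral>\<^sup>+ x. f \<omega> x \<partial>\<mu>) \<partial>M) \<le> R * emeasure \<mu> (space \<mu>)"
proof -
  have "(\<integral>\<^sup>+ \<omega>. (\<integral>\<^sup>+ x. f \<omega> x \<partial>\<mu>) \<partial>M) = (\<integral>\<^sup>+ x. (\<integral>\<^sup>+ \<omega>. f \<omega> x \<partial>M) \<partial>\<mu>)"
    using pair_sigma_finite.Fubini[OF assms(1) meas] by simp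
  also have "\<dots> \<le> (\<integral>\<^sup>+ x. R \<partial>\<mu>)"
    using bound by (intro nn_integral_mono) auto
  finally show ?thesis
    by (simp add: mult.commute)
qed

lemma nn_integral_ge_on_set:
  assumes "U \<in> sets \<mu>" "\<And>t. t \<in> U \<Longrightarrow> y \<le> f t"
  shows "y * emeasure \<mu> U \<le> (\<integral>\<^sup>+ t. f t \<partial>\<mu>)"
proof -
  have "y * emeasure \<mu> U = (\<integral>\<^sup>+ t. y * indicator U t \<partial>\<mu>)"
    using assms(1) by (simp add: nn_integral_cmult_indicator)
  also have "\<dots> \<le> (\<integral>\<^sup>+ t. f t \<partial>\<mu>)"
    using assms(2) by (intro nn_integral_mono) (auto split: split_indicator)
  finally show ?thesis .
qed

lemma nn_integral_exp_ge_on_set: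
  fixes Y :: "'a \<Rightarrow> real"
  assumes "finite_measure \<mu>" "U \<in> sets \<mu>" "m \<le> measure \<mu> U" "\<gamma> \<ge> 0"
    and "\<And>t. t \<in> U \<Longrightarrow> b \<le> Y t"
  shows "ennreal (m * exp (\<gamma> * b)) \<le> (\<integral>\<^sup>+ t. ennreal (exp (\<gamma> * Y t)) \<partial>\<mu>)"
proof -
  have "ennreal (m * exp (\<gamma> * b)) \<le> ennreal (exp (\<gamma> * b)) * emeasure \<mu> U"
    using assms(1,3)
    by (simp add: finite_measure.emeasure_eq_measure mult.commute flip: ennreal_mult)
  also have "\<dots> \<le> (\<integral>\<^sup>+ t. ennreal (exp (\<gamma> * Y t)) \<partial>\<mu>)"
    using assms(2,4,5) by (intro nn_integral_ge_on_set) (auto intro: mult_left_mono)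
  finally show ?thesis .
qed

lemma nn_integral_Markov_inequality_measure:
  assumes "finite_measure M" "I \<in> borel_measurable M" "T > 0" "B \<ge> 0"
    and "(\<integral>\<^sup>+ \<omega>. I \<omega> \<partial>M) \<le> ennreal B"
  shows "measure M {\<omega> \<in> space M. ennreal T \<le> I \<omega>} \<le> B / T"
proof -
  interpret finite_measure M by fact
  let ?S = "{\<omega> \<in> space M. ennreal T \<le> I \<omega>}"
  have "?S \<in> sets M"
    using assms(2) by measurable
  then have "ennreal T * emeasure M ?S \<le> (\<integral>\<^sup>+ \<omega>. I \<omega> \<partial>M)"
    by (intro nn_integral_ge_on_set) auto
  also have "\<dots> \<le> ennreal B"
    by fact
  finally have "T * measure M ?S \<le> B"
    using assms(3,4) by (simp add: emeasure_eq_measure flip: ennreal_mult)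
  then show ?thesis
    using assms(3) by (simp add: field_simps)
qed

lemma outer_prob_exceedance_le:
  fixes X :: "'w \<Rightarrow> 'a \<Rightarrow> real"
  assumes "finite_measure M" "finite_measure \<mu>"
    and meas: "(\<lambda>(\<omega>, x). X \<omega> x) \<in> borel_measurable (M \<Otimes>\<^sub>M \<mu>)"
    and "\<gamma> > 0" "m > 0" "R \<ge> 0"
    and moment: "\<And>x. x \<in> space \<mu> \<Longrightarrow> (\<integral>\<^sup>+ \<omega>. ennreal (exp (\<gamma> * X \<omega> x)) \<partial>M) \<le> ennreal R"
    and plateau: "AE \<omega> in M. \<forall>x \<in> space \<mu>. \<exists>U \<in> sets \<mu>.
       m \<le> measure \<mu> U \<and> (\<forall>t \<in> U. X \<omega> x - C \<le> X \<omega> t)"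
  shows "outer_prob M {\<omega> \<in> space M. \<exists>x \<in> space \<mu>. a \<le> X \<omega> x}
           \<le> R * measure \<mu> (space \<mu>) * exp (\<gamma> * C) / m * exp (- \<gamma> * a)"
proof -
  interpret M: finite_measure M by fact
  interpret \<mu>: finite_measure \<mu> by fact
  interpret pair_sigma_finite M \<mu> ..
  define I where "I \<omega> = (\<integral>\<^sup>+ t. ennreal (exp (\<gamma> * X \<omega> t)) \<partial>\<mu>)" for \<omega>
  define T where "T = m * exp (\<gamma> * (a - C))"
  have exp_meas: "(\<lambda>(\<omega>, t). ennreal (exp (\<gamma> * X \<omega> t))) \<in> borel_measurable (M \<Otimes>\<^sub>M \<mu>)"
    using meas by measurable
  then have I_meas: "I \<in> borel_measurable M"
    unfolding I_def using \<mu>.borel_measurable_nn_integral_fst by fastforce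
  have "AE \<omega> in M. \<omega> \<in> {\<omega> \<in> space M. \<exists>x \<in> space \<mu>. a \<le> X \<omega> x}
                   \<longrightarrow> \<omega> \<in> {\<omega> \<in> space M. ennreal T \<le> I \<omega>}"
    using plateau
  proof eventually_elim
    case (elim \<omega>)
    show ?case
    proof
      assume "\<omega> \<in> {\<omega> \<in> space M. \<exists>x \<in> space \<mu>. a \<le> X \<omega> x}"
      then obtain x where "\<omega> \<in> space M" "x \<in> space \<mu>" "a \<le> X \<omega> x" by blast
      with elim obtain U where "U \<in> sets \<mu>" "m \<le> measure \<mu> U" "\<forall>t \<in> U. a - C \<le> X \<omega> t"
        by force
      then have "ennreal T \<le> I \<omega>"
        unfolding T_def I_def using \<open>\<gamma> > 0\<close>
        by (intro nn_integral_exp_ge_on_set[OF assms(2)]) auto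
      then show "\<omega> \<in> {\<omega> \<in> space M. ennreal T \<le> I \<omega>}"
        using \<open>\<omega> \<in> space M\<close> by simp
    qed
  qed
  then have "outer_prob M {\<omega> \<in> space M. \<exists>x \<in> space \<mu>. a \<le> X \<omega> x}
      \<le> measure M {\<omega> \<in> space M. ennreal T \<le> I \<omega>}"
    using I_meas by (intro outer_prob_le_measure_AE) auto
  also have "\<dots> \<le> R * measure \<mu> (space \<mu>) / T"
  proof (rule nn_integral_Markov_inequality_measure[OF assms(1) I_meas])
    have "(\<integral>\<^sup>+ \<omega>. I \<omega> \<partial>M) \<le> ennreal R * emeasure \<mu> (space \<mu>)"
      unfolding I_def using pair_sigma_finite_axioms exp_meas moment
      by (intro nn_integral_iterated_le) auto
    then show "(\<integral>\<^sup>+ \<omega>. I \<omega> \<partial>M) \<le> ennreal (R * measure \<mu> (space \<mu>))"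
      using \<open>R \<ge> 0\<close> by (simp add: \<mu>.emeasure_eq_measure ennreal_mult')
  qed (use \<open>m > 0\<close> \<open>R \<ge> 0\<close> in \<open>simp_all add: T_def\<close>)
  also have "\<dots> = R * measure \<mu> (space \<mu>) * exp (\<gamma> * C) / m * exp (- \<gamma> * a)"
    by (simp add: T_def right_diff_distrib exp_diff exp_minus divide_inverse ac_simps)
  finally show ?thesis .
qed

lemma outer_prob_exceedance_le_lborel:
  fixes X :: "'w \<Rightarrow> 'a::euclidean_space \<Rightarrow> real"
  assumes "finite_measure M" "\<Omega> \<in> sets lborel" "emeasure lborel \<Omega> < \<infinity>"
    and meas: "(\<lambda>(\<omega>, x). X \<omega> x) \<in> borel_measurable (M \<Otimes>\<^sub>M restrict_space lborel \<Omega>)"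
    and "\<gamma> > 0" "R \<ge> 0" "\<epsilon> > 0" "c > 0"
    and moment: "\<And>x. x \<in> \<Omega> \<Longrightarrow>
       (\<integral>\<^sup>+ \<omega>. ennreal (exp (\<gamma> * X \<omega> x)) \<partial>M) \<le> ennreal (R * \<epsilon> powr (- (\<gamma>\<^sup>2 / 2)))"
    and plateau: "AE \<omega> in M. \<forall>x \<in> \<Omega>. \<exists>U. compact U \<and> U \<subseteq> \<Omega> \<and>
       measure lborel U \<ge> c * \<epsilon> ^ d \<and> (\<forall>t \<in> U. X \<omega> t \<ge> X \<omega> x - C)"
  shows "outer_prob M {\<omega> \<in> space M. \<exists>x \<in> \<Omega>. a \<le> X \<omega> x}
           \<le> R * measure lborel \<Omega> * exp (\<gamma> * C) / c * \<epsilon> powr (- (\<gamma>\<^sup>2 / 2) - real d)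
              * exp (- \<gamma> * a)"
proof -
  let ?\<mu> = "restrict_space lborel \<Omega>"
  have space: "space ?\<mu> = \<Omega>"
    by (simp add: space_restrict_space)
  have finite: "finite_measure ?\<mu>"
    using assms(2,3) by (intro finite_measureI) (simp add: emeasure_restrict_space space)
  have "AE \<omega> in M. \<forall>x \<in> space ?\<mu>. \<exists>U \<in> sets ?\<mu>.
          c * \<epsilon> ^ d \<le> measure ?\<mu> U \<and> (\<forall>t \<in> U. X \<omega> x - C \<le> X \<omega> t)"
    using plateau
    by eventually_elim
      (use assms(2) in \<open>fastforce simp: space sets_restrict_space_iff measure_restrict_space
                          compact_imp_closed\<close>)
  then have "outer_prob M {\<omega> \<in> space M. \<exists>x \<in> \<Omega>. a \<le> X \<omega> x}
      \<le> R * \<epsilon> powr (- (\<gamma>\<^sup>2 / 2)) * measure lborel \<Omega> * exp (\<gamma> * C) / (c * \<epsilon> ^ d)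
         * exp (- \<gamma> * a)"
    using outer_prob_exceedance_le[OF assms(1) finite meas \<open>\<gamma> > 0\<close>, of "c * \<epsilon> ^ d"] moment
      assms(2,6,7,8)
    by (simp add: space measure_restrict_space)
  also have "\<dots> = R * measure lborel \<Omega> * exp (\<gamma> * C) / c * \<epsilon> powr (- (\<gamma>\<^sup>2 / 2) - real d)
                   * exp (- \<gamma> * a)"
    using \<open>\<epsilon> > 0\<close> by (simp add: powr_diff powr_realpow)
  finally show ?thesis .
qed

lemma open_imp_measure_lborel_pos:
  fixes S :: "'a::euclidean_space set"
  assumes "open S" "S \<noteq> {}" "bounded S"
  shows "0 < measure lborel S"
proof -
  obtain x r where "r > 0" "ball x r \<subseteq> S"
    using assms(1,2) open_contains_ball by blast
  have "S \<in> fmeasurable lborel"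
    using assms(1,3) emeasure_bounded_finite by (intro fmeasurableI) (auto simp: less_top)
  then have "measure lborel (ball x r) \<le> measure lborel S"
    using \<open>ball x r \<subseteq> S\<close> by (intro measure_mono_fmeasurable) auto
  then show ?thesis
    using content_ball_pos[OF \<open>r > 0\<close>, of x] by linarith
qed

lemma outer_prob_exceedance_le_powr:
  fixes X :: "nat \<Rightarrow> 'w \<Rightarrow> 'a::euclidean_space \<Rightarrow> real"
  assumes "\<And>N. finite_measure (M N)" "open \<Omega>" "\<Omega> \<noteq> {}" "bounded \<Omega>"
    and meas: "\<And>N. (\<lambda>(\<omega>, x). X N \<omega> x) \<in> borel_measurable (M N \<Otimes>\<^sub>M restrict_space lborel \<Omega>)"
    and "\<And>N. \<epsilon> N > 0" "\<gamma> > 0" "c > 0"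
    and moment: "\<exists>R>0. \<forall>N. \<forall>x \<in> \<Omega>.
       (\<integral>\<^sup>+ \<omega>. ennreal (exp (\<gamma> * X N \<omega> x)) \<partial>M N) \<le> ennreal (R * \<epsilon> N powr (- (\<gamma>\<^sup>2 / 2)))"
    and plateau: "\<And>N. AE \<omega> in M N. \<forall>x \<in> \<Omega>. \<exists>U. compact U \<and> U \<subseteq> \<Omega> \<and>
       measure lborel U \<ge> c * \<epsilon> N ^ d \<and> (\<forall>t \<in> U. X N \<omega> t \<ge> X N \<omega> x - C)"
  shows "\<exists>K>0. \<forall>N a. outer_prob (M N) {\<omega> \<in> space (M N). \<exists>x \<in> \<Omega>. a \<le> X N \<omega> x}
           \<le> K * \<epsilon> N powr (- (\<gamma>\<^sup>2 / 2) - real d) * exp (- \<gamma> * a)"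
proof -
  obtain R where "R > 0" and moment_R: "\<forall>N. \<forall>x \<in> \<Omega>.
      (\<integral>\<^sup>+ \<omega>. ennreal (exp (\<gamma> * X N \<omega> x)) \<partial>M N) \<le> ennreal (R * \<epsilon> N powr (- (\<gamma>\<^sup>2 / 2)))"
    using moment by blast
  have "emeasure lborel \<Omega> < \<infinity>"
    using emeasure_bounded_finite[OF assms(4)] by (simp add: less_top)
  moreover have "0 < measure lborel \<Omega>"
    using assms(2-4) by (rule open_imp_measure_lborel_pos)
  ultimately show ?thesis
    using \<open>R > 0\<close> \<open>c > 0\<close> \<open>\<gamma> > 0\<close> \<open>open \<Omega>\<close> moment_R assms(6)
    by (intro exI[of _ "R * measure lborel \<Omega> * exp (\<gamma> * C) / c"] conjI allI
        outer_prob_exceedance_le_lborel[OF assms(1) _ _ meas _ _ _ _ _ plateau]) auto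
qed

lemma outer_prob_SUP_ge_le:
  fixes Y :: "'w \<Rightarrow> 'a \<Rightarrow> real"
  assumes "\<Omega> \<noteq> {}" "\<And>\<omega>. \<omega> \<in> space M \<Longrightarrow> bdd_above (Y \<omega> ` \<Omega>)" "\<delta> > 0"
  shows "outer_prob M {\<omega> \<in> space M. a \<le> (SUP x \<in> \<Omega>. Y \<omega> x)}
           \<le> outer_prob M {\<omega> \<in> space M. \<exists>x \<in> \<Omega>. a - \<delta> \<le> Y \<omega> x}"
proof (rule outer_prob_mono)
  show "{\<omega> \<in> space M. a \<le> (SUP x \<in> \<Omega>. Y \<omega> x)} \<subseteq> {\<omega> \<in> space M. \<exists>x \<in> \<Omega>. a - \<delta> \<le> Y \<omega> x}"
  proof safe
    fix \<omega> assume "\<omega> \<in> space M" "a \<le> (SUP x \<in> \<Omega>. Y \<omega> x)"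
    then have "a - \<delta> < (SUP x \<in> \<Omega>. Y \<omega> x)"
      using \<open>\<delta> > 0\<close> by linarith
    then show "\<exists>x \<in> \<Omega>. a - \<delta> \<le> Y \<omega> x"
      using less_cSUP_iff[OF assms(1) assms(2)[OF \<open>\<omega> \<in> space M\<close>]] by (auto intro: less_imp_le)
  qed
qed auto

lemma outer_prob_SUP_ge_le_exp:
  fixes Y :: "'w \<Rightarrow> 'a \<Rightarrow> real"
  assumes "\<Omega> \<noteq> {}" "\<And>\<omega>. \<omega> \<in> space M \<Longrightarrow> bdd_above (Y \<omega> ` \<Omega>)"
    and bound: "\<And>b. outer_prob M {\<omega> \<in> space M. \<exists>x \<in> \<Omega>. b \<le> Y \<omega> x} \<le> K * q * exp (- \<gamma> * b)"
  shows "outer_prob M {\<omega> \<in> space M. a \<le> (SUP x \<in> \<Omega>. Y \<omega> x)} \<le> K * exp \<gamma> * q * exp (- \<gamma> * a)"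
proof -
  have "outer_prob M {\<omega> \<in> space M. a \<le> (SUP x \<in> \<Omega>. Y \<omega> x)}
      \<le> outer_prob M {\<omega> \<in> space M. \<exists>x \<in> \<Omega>. a - 1 \<le> Y \<omega> x}"
    using outer_prob_SUP_ge_le[where \<delta>=1, OF assms(1,2)] by simp
  also have "\<dots> \<le> K * q * exp (- \<gamma> * (a - 1))"
    by (rule bound)
  also have "exp (- \<gamma> * (a - 1)) = exp \<gamma> * exp (- \<gamma> * a)"
    by (simp add: algebra_simps flip: exp_add)
  finally show ?thesis
    by (simp only: mult_ac)
qed

lemma thick_points_nonempty_iff:
  "thick_points \<Omega> \<epsilon> Y \<alpha> \<noteq> {} \<longleftrightarrow> (\<exists>x \<in> \<Omega>. \<alpha> * ln (1 / \<epsilon>) \<le> Y x)"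
  by (auto simp: thick_points_def)

lemma tendsto_zero_at_thick_level:
  fixes \<epsilon> P :: "nat \<Rightarrow> real"
  assumes "\<And>N. \<epsilon> N > 0" "\<epsilon> \<longlonglongrightarrow> 0" "2 * d < \<alpha>\<^sup>2"
    and "\<And>N. 0 \<le> P N"
    and "\<And>N. P N \<le> K * \<epsilon> N powr (- (\<alpha>\<^sup>2 / 2) - d) * exp (- \<alpha> * (\<alpha> * ln (1 / \<epsilon> N)))"
  shows "P \<longlonglongrightarrow> 0"
proof (rule tendsto_sandwich[OF _ _ tendsto_const])
  have "\<epsilon> N powr (- (\<alpha>\<^sup>2 / 2) - d) * exp (- \<alpha> * (\<alpha> * ln (1 / \<epsilon> N)))
          = \<epsilon> N powr (\<alpha>\<^sup>2 / 2 - d)" for N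
    using assms(1)[of N]
    by (simp add: ln_div powr_def flip: exp_add) (simp add: power2_eq_square algebra_simps)
  then show "\<forall>\<^sub>F N in sequentially. P N \<le> K * \<epsilon> N powr (\<alpha>\<^sup>2 / 2 - d)"
    using assms(5) by (simp add: mult.assoc)
  have "(\<lambda>N. \<epsilon> N powr (\<alpha>\<^sup>2 / 2 - d)) \<longlonglongrightarrow> 0"
    using assms(1,3)
    by (intro tendsto_zero_powrI[OF assms(2) tendsto_const]) (auto intro!: always_eventually less_imp_le)
  then show "(\<lambda>N. K * \<epsilon> N powr (\<alpha>\<^sup>2 / 2 - d)) \<longlonglongrightarrow> 0"
    by (rule tendsto_mult_right_zero)
qed (use assms(4) in simp)

theorem proposition3p8:
  fixes \<Omega> :: "'a::euclidean_space set"
    and M :: "nat \<Rightarrow> 'w measure"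
    and X :: "nat \<Rightarrow> 'w \<Rightarrow> 'a \<Rightarrow> real"
    and g :: "'a \<Rightarrow> 'a \<Rightarrow> real"
    and \<epsilon> :: "nat \<Rightarrow> real"
  assumes dom: "bounded \<Omega>" "open \<Omega>" "\<Omega> \<noteq> {}" "simply_connected \<Omega>" "smooth_boundary \<Omega>"
    and prob: "\<And>N. prob_space (M N)"
    and meas: "\<And>N. (\<lambda>(\<omega>, x). X N \<omega> x) \<in> borel_measurable (M N \<Otimes>\<^sub>M restrict_space lborel \<Omega>)"
    and integ: "\<And>N \<omega>. \<omega> \<in> space (M N) \<Longrightarrow> set_integrable lborel \<Omega> (X N \<omega>)"
    and bdd: "\<And>N \<omega>. \<omega> \<in> space (M N) \<Longrightarrow> \<exists>B. \<forall>x \<in> \<Omega>. X N \<omega> x \<le> B"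
    and usc: "\<And>N \<omega>. \<omega> \<in> space (M N) \<Longrightarrow> usc_on \<Omega> (X N \<omega>)"
    and g_cont: "continuous_on (\<Omega> \<times> \<Omega>) (\<lambda>(x, y). g x y)"
    and g_bdd: "\<exists>B. \<forall>x \<in> \<Omega>. \<forall>y \<in> \<Omega>. g x y \<le> B"
    and g_L2: "set_integrable (lborel \<Otimes>\<^sub>M lborel) (\<Omega> \<times> \<Omega>) (\<lambda>(x, y). (g x y)\<^sup>2)"
    and approx: "\<And>f. test_function \<Omega> f \<Longrightarrow>
       (let s2 = (\<integral>p \<in> \<Omega> \<times> \<Omega>. f (fst p) * f (snd p) *
                     (ln (1 / dist (fst p) (snd p)) + g (fst p) (snd p)) \<partial>(lborel \<Otimes>\<^sub>M lborel))
        in s2 \<ge> 0 \<and>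
           weak_conv_m (\<lambda>N. distr (M N) borel (\<lambda>\<omega>. \<integral>x \<in> \<Omega>. f x * X N \<omega> x \<partial>lborel))
                       (centered_normal s2))"
    and eps_pos: "\<And>N. \<epsilon> N > 0"
    and eps_lim: "\<epsilon> \<longlonglongrightarrow> 0"
    and moment: "\<And>\<gamma>. \<gamma> > 0 \<Longrightarrow> \<exists>R>0. \<forall>N. \<forall>x \<in> \<Omega>.
        (\<integral>\<^sup>+ \<omega>. ennreal (exp (\<gamma> * X N \<omega> x)) \<partial>M N) \<le> ennreal (R * \<epsilon> N powr (- (\<gamma>\<^sup>2 / 2)))"
    and mho: "\<exists>C>0. \<exists>c>0. \<forall>N. AE \<omega> in M N. \<forall>x \<in> \<Omega>. \<exists>U. compact U \<and> U \<subseteq> \<Omega> \<and>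
        measure lborel U \<ge> c * \<epsilon> N ^ DIM('a) \<and> (\<forall>t \<in> U. X N \<omega> t \<ge> X N \<omega> x - C)"
  shows "(\<forall>\<alpha>. \<alpha> > sqrt (2 * real DIM('a)) \<longrightarrow>
            (\<lambda>N. outer_prob (M N) {\<omega> \<in> space (M N). thick_points \<Omega> (\<epsilon> N) (X N \<omega>) \<alpha> \<noteq> {}})
              \<longlonglongrightarrow> 0)
       \<and> (\<forall>w :: nat \<Rightarrow> real. incseq w \<longrightarrow>
            filterlim (\<lambda>N. w N / ln (1 / \<epsilon> N)) at_top sequentially \<longrightarrow>
            (\<forall>\<gamma>>0. \<exists>C_g>0. \<forall>N.
               outer_prob (M N) {\<omega> \<in> space (M N). (SUP x \<in> \<Omega>. X N \<omega> x) \<ge> w N}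
                 \<le> C_g * \<epsilon> N powr (- (\<gamma>\<^sup>2 / 2) - real DIM('a)) * exp (- \<gamma> * w N)))"
proof -
  from mho obtain C c where "c > 0" and plateau: "\<And>N. AE \<omega> in M N. \<forall>x \<in> \<Omega>. \<exists>U. compact U \<and>
      U \<subseteq> \<Omega> \<and> measure lborel U \<ge> c * \<epsilon> N ^ DIM('a) \<and> (\<forall>t \<in> U. X N \<omega> t \<ge> X N \<omega> x - C)"
    by blast
  have exceedance: "\<exists>K>0. \<forall>N a. outer_prob (M N) {\<omega> \<in> space (M N). \<exists>x \<in> \<Omega>. a \<le> X N \<omega> x}
      \<le> K * \<epsilon> N powr (- (\<gamma>\<^sup>2 / 2) - real DIM('a)) * exp (- \<gamma> * a)" if "\<gamma> > 0" for \<gamma>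
    using outer_prob_exceedance_le_powr[OF prob_space.finite_measure[OF prob] dom(2,3,1) meas eps_pos
        that \<open>c > 0\<close> moment[OF that] plateau] .
  have "(\<lambda>N. outer_prob (M N) {\<omega> \<in> space (M N). thick_points \<Omega> (\<epsilon> N) (X N \<omega>) \<alpha> \<noteq> {}}) \<longlonglongrightarrow> 0"
    if "\<alpha> > sqrt (2 * real DIM('a))" for \<alpha>
  proof -
    have "\<alpha> > 0"
      using that real_sqrt_ge_zero[of "2 * real DIM('a)"] by linarith
    then have "2 * real DIM('a) < \<alpha>\<^sup>2"
      using that real_sqrt_less_iff[of "2 * real DIM('a)" "\<alpha>\<^sup>2"] by simp
    obtain K where "\<forall>N a. outer_prob (M N) {\<omega> \<in> space (M N). \<exists>x \<in> \<Omega>. a \<le> X N \<omega> x}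
        \<le> K * \<epsilon> N powr (- (\<alpha>\<^sup>2 / 2) - real DIM('a)) * exp (- \<alpha> * a)"
      using exceedance[OF \<open>\<alpha> > 0\<close>] by blast
    then show ?thesis
      unfolding thick_points_nonempty_iff
      by (intro tendsto_zero_at_thick_level[OF eps_pos eps_lim \<open>2 * real DIM('a) < \<alpha>\<^sup>2\<close>])
        (auto simp: outer_prob_nonneg)
  qed
  moreover \<comment> \<open>The tail bound holds for every sequence \<open>w\<close>.\<close>
  have "\<exists>C_g>0. \<forall>N. outer_prob (M N) {\<omega> \<in> space (M N). (SUP x \<in> \<Omega>. X N \<omega> x) \<ge> w N}
      \<le> C_g * \<epsilon> N powr (- (\<gamma>\<^sup>2 / 2) - real DIM('a)) * exp (- \<gamma> * w N)"
    if "\<gamma> > 0" for \<gamma> and w :: "nat \<Rightarrow> real"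
  proof -
    obtain K where "K > 0" and K: "\<forall>N a. outer_prob (M N) {\<omega> \<in> space (M N). \<exists>x \<in> \<Omega>. a \<le> X N \<omega> x}
        \<le> K * \<epsilon> N powr (- (\<gamma>\<^sup>2 / 2) - real DIM('a)) * exp (- \<gamma> * a)"
      using exceedance[OF \<open>\<gamma> > 0\<close>] by blast
    then show ?thesis
      using dom(3) bdd
      by (intro exI[of _ "K * exp \<gamma>"] conjI allI outer_prob_SUP_ge_le_exp)
        (auto simp: bdd_above_def image_iff)
  qed
  ultimately show ?thesis
    by blast
qed

end
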